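(* Consider the algorithmic framework described below, with arbitrary parameters $\xi>1$, $\gamma\in(0,1)$, $\eta\ge 1$, in either its non-amortized or amortized variant. At all times (after the first job has arrived and after each insertion procedure), the current guess $T$ satisfies $\xi^{-1}T<\mathrm{OPT}(I^* )$, where $I^*$ is the instance consisting of all jobs arrived so far.
   Context: Problem: machines $1,\dots,m$ with speeds $s_1\ge s_2\ge\dots\ge s_m>0$; jobs arrive online, job $j$ has size $p_j>0$; the load of job $j$ on machine $i$ is $p_j/s_i$; $\mathrm{OPT}(I^* )$ is the minimum possible maximum machine load over all assignments of the jobs of $I^*$ to machines. Framework: it keeps a guess $T$, and for each machine $i$ a partition of its jobs into old jobs $\hat J_i$ and new jobs $\check J_i$; in the amortized variant also a potential $\pi_i$ per machine. Machine $i$ is saturated if $\check\ell_i:=\sum_{j\in\check J_i}p_j/s_i\ge T$, and $\eta$-eligible for job $j$ if $p_j/s_i\le \eta T$. Let $\tilde{\mathcal M}(\eta,j)$ be the set of machines that are $\eta$-eligible for $j$ and not saturated. When the first job $j_1$ arrives, set $T=p_{j_1}/s_1$ and place $j_1$ on machine 1. When a later job $j^*$ arrives, put it into a priority queue $Q$ (larger size = higher priority) and run: while $Q$ is nonempty, remove the largest job $j'$ from $Q$; then repeat: if $\tilde{\mathcal M}(\eta,j')\ne\emptyset$, choose a slowest machine $i'$ in it, move every $j\in\hat J_{i'}$ with $p_j\ge \eta^{-1}p_{j'}$ from $\hat J_{i'}$ to $\check J_{i'}$, and if $i'$ is still not saturated stop repeating; otherwise (if $\tilde{\mathcal M}(\eta,j')=\emptyset$)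 set $T:=\xi T$ and for every machine $i$ move all jobs of $\check J_i$ to $\hat J_i$ (and, in the amortized variant, set $\pi_i=0$). After a machine $i'$ is found, set $\pi:=\gamma p_{j'}$ (amortized variant: $\pi:=\gamma p_{j'}+\pi_{i'}$); go through the jobs $j\in\hat J_{i'}$ in non-increasing order of size and, whenever $p_j\le\pi$, set $\pi:=\pi-p_j$ and move $j$ from $\hat J_{i'}$ into $Q$ (i.e., remove it from machine $i'$ to be reinserted). Finally assign $j'$ to $i'$ by adding it to $\check J_{i'}$ (amortized variant: and set $\pi_{i'}:=\pi$). *)

theory Defs
  imports Complex_Main "HOL-Library.FuncSet"
begin

text \<open>Machines are indexed 0..m-1 (machine 0 is the fastest, i.e. the paper's machine 1).
Jobs are identified by their arrival index 0,1,2,...; job j has size p j.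
The instance after n arrivals consists of the jobs {0..<n}.\<close>

definition OPT :: "nat \<Rightarrow> (nat \<Rightarrow> real) \<Rightarrow> (nat \<Rightarrow> real) \<Rightarrow> nat set \<Rightarrow> real" where
  "OPT m s p J = Min ((\<lambda>\<sigma>. Max ((\<lambda>i. (\<Sum>j\<in>{j\<in>J. \<sigma> j = i}. p j) / s i) ` {..<m}))
                       ` (J \<rightarrow>\<^sub>E {..<m}))"

record cfg =
  gT :: real
  oldJ :: "nat \<Rightarrow> nat set"
  newJ :: "nat \<Rightarrow> nat set"
  pot :: "nat \<Rightarrow> real"
  queue :: "nat set"
  cur :: "nat option"            \<comment> \<open>the job j' currently being placed, if any\<close>

definition saturated :: "(nat \<Rightarrow> real) \<Rightarrow> (nat \<Rightarrow> real) \<Rightarrow> cfg \<Rightarrow> nat \<Rightarrow> bool" where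
  "saturated s p c i \<longleftrightarrow> (\<Sum>j\<in>newJ c i. p j / s i) \<ge> gT c"

definition Mt :: "nat \<Rightarrow> (nat \<Rightarrow> real) \<Rightarrow> (nat \<Rightarrow> real) \<Rightarrow> real \<Rightarrow> cfg \<Rightarrow> nat \<Rightarrow> nat set" where
  "Mt m s p \<eta> c j = {i. i < m \<and> p j / s i \<le> \<eta> * gT c \<and> \<not> saturated s p c i}"

definition promote :: "(nat \<Rightarrow> real) \<Rightarrow> real \<Rightarrow> cfg \<Rightarrow> nat \<Rightarrow> nat \<Rightarrow> cfg" where
  "promote p \<eta> c i j =
     c\<lparr>oldJ := (oldJ c)(i := {k \<in> oldJ c i. \<not> (p j / \<eta> \<le> p k)}),
       newJ := (newJ c)(i := newJ c i \<union> {k \<in> oldJ c i. p j / \<eta> \<le> p k})\<rparr>"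

text \<open>Greedy pass through the old jobs (given in non-increasing order of size) with budget \<pi>:
returns the set of removed jobs and the remaining budget.\<close>
fun greedy :: "(nat \<Rightarrow> real) \<Rightarrow> real \<Rightarrow> nat list \<Rightarrow> nat set \<times> real" where
  "greedy p \<pi> [] = ({}, \<pi>)"
| "greedy p \<pi> (x # xs) =
     (if p x \<le> \<pi> then (let (R, \<pi>') = greedy p (\<pi> - p x) xs in (insert x R, \<pi>'))
      else greedy p \<pi> xs)"

text \<open>One atomic step of the insertion procedure (all nondeterministic tie-breaking allowed).\<close>
inductive step :: "nat \<Rightarrow> (nat \<Rightarrow> real) \<Rightarrow> (nat \<Rightarrow> real) \<Rightarrow> real \<Rightarrow> real \<Rightarrow> real \<Rightarrow> bool
                    \<Rightarrow> cfg \<Rightarrow> cfg \<Rightarrow> bool"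
  for m s p \<xi> \<gamma> \<eta> amort where
  pick: "\<lbrakk> cur c = None; j \<in> queue c; \<forall>k\<in>queue c. p k \<le> p j \<rbrakk>
         \<Longrightarrow> step m s p \<xi> \<gamma> \<eta> amort c (c\<lparr>queue := queue c - {j}, cur := Some j\<rparr>)"
| raise: "\<lbrakk> cur c = Some j; Mt m s p \<eta> c j = {} \<rbrakk>
         \<Longrightarrow> step m s p \<xi> \<gamma> \<eta> amort c
               (c\<lparr>gT := \<xi> * gT c, oldJ := (\<lambda>i. oldJ c i \<union> newJ c i), newJ := (\<lambda>i. {}),
                  pot := (if amort then (\<lambda>i. 0) else pot c)\<rparr>)"
| promote_sat: "\<lbrakk> cur c = Some j; i \<in> Mt m s p \<eta> c j; \<forall>k\<in>Mt m s p \<eta> c j. s i \<le> s k;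
                 saturated s p (promote p \<eta> c i j) i \<rbrakk>
         \<Longrightarrow> step m s p \<xi> \<gamma> \<eta> amort c (promote p \<eta> c i j)"
| place: "\<lbrakk> cur c = Some j; i \<in> Mt m s p \<eta> c j; \<forall>k\<in>Mt m s p \<eta> c j. s i \<le> s k;
           c' = promote p \<eta> c i j; \<not> saturated s p c' i;
           distinct xs; set xs = oldJ c' i; sorted_wrt (\<lambda>a b. p b \<le> p a) xs;
           greedy p (\<gamma> * p j + (if amort then pot c' i else 0)) xs = (R, \<pi>) \<rbrakk>
         \<Longrightarrow> step m s p \<xi> \<gamma> \<eta> amort c
               (c'\<lparr>oldJ := (oldJ c')(i := oldJ c' i - R),
                   newJ := (newJ c')(i := insert j (newJ c' i)),
                   queue := queue c' \<union> R, cur := None,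
                   pot := (if amort then (pot c')(i := \<pi>) else pot c')\<rparr>)"

definition init_cfg :: "(nat \<Rightarrow> real) \<Rightarrow> (nat \<Rightarrow> real) \<Rightarrow> cfg" where
  "init_cfg s p = \<lparr>gT = p 0 / s 0, oldJ = (\<lambda>i. {}), newJ = (\<lambda>i. {})(0 := {0}),
                   pot = (\<lambda>i. 0), queue = {}, cur = None\<rparr>"

text \<open>reach ... n c: c is a configuration of the algorithm after n jobs (0..n-1) have arrived
and the corresponding insertion procedures have terminated.\<close>
inductive reach :: "nat \<Rightarrow> (nat \<Rightarrow> real) \<Rightarrow> (nat \<Rightarrow> real) \<Rightarrow> real \<Rightarrow> real \<Rightarrow> real \<Rightarrow> bool
                    \<Rightarrow> nat \<Rightarrow> cfg \<Rightarrow> bool"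
  for m s p \<xi> \<gamma> \<eta> amort where
  first: "reach m s p \<xi> \<gamma> \<eta> amort 1 (init_cfg s p)"
| arrive: "\<lbrakk> reach m s p \<xi> \<gamma> \<eta> amort n c;
            (step m s p \<xi> \<gamma> \<eta> amort)\<^sup>*\<^sup>* (c\<lparr>queue := {n}\<rparr>) c';
            queue c' = {}; cur c' = None \<rbrakk>
         \<Longrightarrow> reach m s p \<xi> \<gamma> \<eta> amort (Suc n) c'"

end

(*
  The guess T only grows, and only when no unsaturated machine is eligible for the current
  job j. The key invariant is that every new job on a machine i is larger than T * s i' for
  each unsaturated machine i' slower than i. When T is about to be raised, let S be the
  machines faster than every unsaturated machine: they are all saturated, so the new jobs on
  S together with j weigh more than T times the total speed of S, while none of them fits
  within load T on a machine outside S. Hence every schedule has a machine of load above T,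
  i.e. T < OPT, which gives the claim for the raised guess xi * T. The initial guess
  p_1 / s_1 is at most OPT, and OPT can only grow when jobs arrive.
*)

theory Submission
  imports Defs "HOL-Library.Disjoint_Sets"
begin

lemma disjoint_family_fun_upd:
  assumes "disjoint_family F" "\<And>y. y \<noteq> x \<Longrightarrow> A \<inter> F y = {}"
  shows "disjoint_family (F(x := A))"
  using assms unfolding disjoint_family_on_def by (auto simp: Int_commute)

lemma disjoint_family_move:
  assumes "disjoint_family F" "A \<subseteq> F x"
  shows "disjoint_family (F(x := F x - A, y := F y \<union> A))"
  using assms unfolding disjoint_family_on_def by auto

lemma UN_range_move: "A \<subseteq> F x \<Longrightarrow> \<Union>(range (F(x := F x - A, y := F y \<union> A))) = \<Union>(range F)"
  by auto

lemma UN_range_merge: "\<Union>(range (\<lambda>y. \<Union>(F ` {x. g x = y}))) = \<Union>(range F)"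
  by blast

lemma disjoint_family_merge:
  fixes F :: "'i \<Rightarrow> 'a set" and g :: "'i \<Rightarrow> 'j"
  assumes "disjoint_family F"
  shows "disjoint_family (\<lambda>y. \<Union>(F ` {x. g x = y}))"
  unfolding disjoint_family_on_def
proof (intro ballI impI)
  fix a b :: 'j assume "a \<noteq> b"
  then have "F x \<inter> F x' = {}" if "g x = a" "g x' = b" for x x'
    using that \<open>a \<noteq> b\<close> by (intro disjoint_family_onD[OF assms]) auto
  then show "\<Union>(F ` {x. g x = a}) \<inter> \<Union>(F ` {x. g x = b}) = {}" by blast
qed

lemma exists_fibre_sum_gt:
  fixes p :: "'a \<Rightarrow> 'c::{ordered_comm_monoid_add, linorder}"
  assumes "finite J" "X \<subseteq> J" "\<sigma> ` X \<subseteq> S" "finite S" "\<And>k. k \<in> J \<Longrightarrow> 0 \<le> p k"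
    and "(\<Sum>i\<in>S. b i) < (\<Sum>k\<in>X. p k)"
  shows "\<exists>i\<in>S. b i < (\<Sum>k\<in>{k\<in>J. \<sigma> k = i}. p k)"
proof (rule ccontr)
  assume small: "\<not> ?thesis"
  have "finite X" using assms(1,2) by (rule finite_subset[rotated])
  have "(\<Sum>k\<in>X. p k) = (\<Sum>i\<in>S. \<Sum>k\<in>{k\<in>X. \<sigma> k = i}. p k)"
    by (rule sum.group[OF \<open>finite X\<close> \<open>finite S\<close> assms(3), symmetric])
  also have "\<dots> \<le> (\<Sum>i\<in>S. \<Sum>k\<in>{k\<in>J. \<sigma> k = i}. p k)"
    using assms(1,2,5) by (intro sum_mono sum_mono2) auto
  also have "\<dots> \<le> (\<Sum>i\<in>S. b i)"
    using small by (intro sum_mono) (simp add: not_less)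
  finally show False using assms(6) by simp
qed

definition load :: "(nat \<Rightarrow> real) \<Rightarrow> (nat \<Rightarrow> real) \<Rightarrow> nat set \<Rightarrow> (nat \<Rightarrow> nat) \<Rightarrow> nat \<Rightarrow> real" where
  "load s p J \<sigma> i = (\<Sum>j\<in>{j\<in>J. \<sigma> j = i}. p j) / s i"

lemma less_OPT_iff:
  assumes "finite J" "0 < m"
  shows "x < OPT m s p J \<longleftrightarrow> (\<forall>\<sigma>\<in>J \<rightarrow>\<^sub>E {..<m}. \<exists>i<m. x < load s p J \<sigma> i)"
proof -
  have "J \<rightarrow>\<^sub>E {..<m} \<noteq> {}" using assms(2) by (auto simp: PiE_eq_empty_iff)
  moreover have "x < Max (load s p J \<sigma> ` {..<m}) \<longleftrightarrow> (\<exists>i<m. x < load s p J \<sigma> i)" for \<sigma>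
    using assms(2) by (subst Max_gr_iff) auto
  ultimately show ?thesis
    using assms(1) unfolding OPT_def load_def[symmetric] by (simp add: finite_PiE)
qed

lemma less_OPT_mono:
  assumes "x < OPT m s p J" "J \<subseteq> J'" "finite J'" "0 < m"
    and "\<And>i. i < m \<Longrightarrow> 0 \<le> s i" "\<And>j. 0 \<le> p j"
  shows "x < OPT m s p J'"
proof -
  have "finite J" using assms(2,3) by (rule finite_subset)
  have "\<exists>i<m. x < load s p J' \<sigma> i" if \<sigma>: "\<sigma> \<in> J' \<rightarrow>\<^sub>E {..<m}" for \<sigma>
  proof -
    have "\<forall>\<tau>\<in>J \<rightarrow>\<^sub>E {..<m}. \<exists>i<m. x < load s p J \<tau> i"
      using assms(1,4) \<open>finite J\<close> by (simp add: less_OPT_iff)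
    moreover have "restrict \<sigma> J \<in> J \<rightarrow>\<^sub>E {..<m}" using \<sigma> assms(2) by auto
    ultimately obtain i where i: "i < m" "x < load s p J (restrict \<sigma> J) i" by blast
    have "{j\<in>J. restrict \<sigma> J j = i} = {j\<in>J. \<sigma> j = i}" by auto
    then have "load s p J (restrict \<sigma> J) i \<le> load s p J' \<sigma> i"
      unfolding load_def using assms(2,3,5,6) i(1) by (auto intro!: divide_right_mono sum_mono2)
    with i show ?thesis by force
  qed
  then show ?thesis using assms(3,4) by (simp add: less_OPT_iff)
qed

lemma saturated_iff: "0 < s i \<Longrightarrow> saturated s p c i \<longleftrightarrow> gT c * s i \<le> (\<Sum>j\<in>newJ c i. p j)"
  by (simp add: saturated_def sum_divide_distrib[symmetric] pos_le_divide_eq)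

lemma fst_greedy_subset: "fst (greedy p \<pi> xs) \<subseteq> set xs"
  by (induction xs arbitrary: \<pi>) (auto split: prod.split, metis fst_conv subsetD)

text \<open>The positions a job can occupy in a configuration. Part of the invariant is that no
  job occupies two of them; every step of the insertion procedure only moves jobs between them.\<close>

datatype slot = Old nat | New nat | Queued | Current

definition jobs_at :: "cfg \<Rightarrow> slot \<Rightarrow> nat set" where
  "jobs_at c x = (case x of Old i \<Rightarrow> oldJ c i | New i \<Rightarrow> newJ c i
                 | Queued \<Rightarrow> queue c | Current \<Rightarrow> set_option (cur c))"

fun demote :: "slot \<Rightarrow> slot" where
  "demote (New i) = Old i"
| "demote x = x"

lemma jobs_at_raise:
  "jobs_at (c\<lparr>gT := t, oldJ := (\<lambda>i. oldJ c i \<union> newJ c i), newJ := (\<lambda>i. {}), pot := q\<rparr>)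
     = (\<lambda>y. \<Union>(jobs_at c ` {x. demote x = y}))"
proof
  fix y
  have "{x. demote x = y} = (case y of Old i \<Rightarrow> {Old i, New i} | New i \<Rightarrow> {} | _ \<Rightarrow> {y})"
    by (auto elim: demote.elims split: slot.split)
  then show "jobs_at (c\<lparr>gT := t, oldJ := (\<lambda>i. oldJ c i \<union> newJ c i), newJ := (\<lambda>i. {}), pot := q\<rparr>) y
      = \<Union>(jobs_at c ` {x. demote x = y})"
    by (simp add: jobs_at_def split: slot.split)
qed

lemma newJ_disjoint:
  "disjoint_family (jobs_at c) \<Longrightarrow> i \<noteq> i' \<Longrightarrow> newJ c i \<inter> newJ c i' = {}"
  using disjoint_family_onD[of "jobs_at c" UNIV "New i" "New i'"] by (simp add: jobs_at_def)

lemma cur_notin_newJ: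
  "disjoint_family (jobs_at c) \<Longrightarrow> cur c = Some j \<Longrightarrow> j \<notin> newJ c i"
  using disjoint_family_onD[of "jobs_at c" UNIV Current "New i"] by (auto simp: jobs_at_def)

lemma finite_newJ:
  assumes "\<Union>(range (jobs_at c)) \<subseteq> {0..<N}"
  shows "finite (newJ c i)"
proof -
  have "jobs_at c (New i) \<subseteq> {0..<N}" using assms by blast
  then show ?thesis by (simp add: jobs_at_def finite_subset)
qed

locale related_machines =
  fixes m :: nat and s p :: "nat \<Rightarrow> real" and \<xi> \<eta> :: real
  assumes machines_nonempty: "0 < m"
    and speeds_pos: "\<And>i. i < m \<Longrightarrow> 0 < s i"
    and first_fastest: "\<And>i. i < m \<Longrightarrow> s i \<le> s 0"
    and sizes_pos: "\<And>j. 0 < p j"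
    and \<xi>_gt_1: "1 < \<xi>" and \<eta>_ge_1: "1 \<le> \<eta>"
begin

definition large_new_jobs :: "cfg \<Rightarrow> bool" where
  "large_new_jobs c \<longleftrightarrow> (\<forall>i i' k. k \<in> newJ c i \<longrightarrow> i' < m \<longrightarrow> s i' < s i
      \<longrightarrow> \<not> saturated s p c i' \<longrightarrow> gT c * s i' < p k)"

definition invariant :: "nat \<Rightarrow> cfg \<Rightarrow> bool" where
  "invariant N c \<longleftrightarrow> 0 < gT c \<and> disjoint_family (jobs_at c) \<and> \<Union>(range (jobs_at c)) \<subseteq> {0..<N}
     \<and> large_new_jobs c \<and> gT c / \<xi> < OPT m s p {0..<N}"

lemma eta_mult_less_imp_less: "\<eta> * x < y \<Longrightarrow> 0 \<le> x \<Longrightarrow> x < y"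
  using mult_right_mono[OF \<eta>_ge_1, of x] by linarith

lemma saturated_mono:
  assumes "saturated s p c i" "i < m" "gT c' = gT c" "newJ c i \<subseteq> newJ c' i" "finite (newJ c' i)"
  shows "saturated s p c' i"
proof -
  have "(\<Sum>j\<in>newJ c i. p j) \<le> (\<Sum>j\<in>newJ c' i. p j)"
    using assms(4,5) sizes_pos by (intro sum_mono2) (auto intro: less_imp_le)
  then show ?thesis using assms(1-3) speeds_pos by (simp add: saturated_iff)
qed

lemma large_new_jobs_extend:
  assumes "large_new_jobs c" "gT c' = gT c"
    and "\<And>i. newJ c i \<subseteq> newJ c' i" "\<And>i. finite (newJ c' i)"
    and "\<And>i i' k. k \<in> newJ c' i - newJ c i \<Longrightarrow> i' < m \<Longrightarrow> s i' < s i \<Longrightarrow>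
           \<not> saturated s p c i' \<Longrightarrow> gT c * s i' < p k"
  shows "large_new_jobs c'"
  unfolding large_new_jobs_def
proof (intro allI impI)
  fix i i' k
  assume k: "k \<in> newJ c' i" and i': "i' < m" "s i' < s i" "\<not> saturated s p c' i'"
  then have "\<not> saturated s p c i'" using saturated_mono assms(2-4) by blast
  with assms(1,2,5) k i' show "gT c' * s i' < p k"
    by (cases "k \<in> newJ c i") (auto simp: large_new_jobs_def)
qed

lemma large_if_ineligible:
  assumes "r < m" "\<not> saturated s p c r" "r \<notin> Mt m s p \<eta> c j"
  shows "\<eta> * gT c * s r < p j"
  using assms speeds_pos[OF assms(1)] by (auto simp: Mt_def not_le pos_less_divide_eq)

lemma large_below_slowest_eligible:
  assumes "i \<in> Mt m s p \<eta> c j" "\<forall>k\<in>Mt m s p \<eta> c j. s i \<le> s k"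
    and "i' < m" "s i' < s i" "\<not> saturated s p c i'"
  shows "\<eta> * gT c * s i' < p j"
proof -
  have "i' \<notin> Mt m s p \<eta> c j" using assms(2,4) by force
  with assms(3,5) show ?thesis by (rule large_if_ineligible)
qed

lemma invariant_boundedD:
  assumes "invariant N c"
  shows "newJ c i \<subseteq> {0..<N}" "finite (newJ c i)" "cur c = Some j \<Longrightarrow> j < N"
proof -
  have "\<Union>(range (jobs_at c)) \<subseteq> {0..<N}" using assms by (simp add: invariant_def)
  then have "jobs_at c (New i) \<subseteq> {0..<N}" "jobs_at c Current \<subseteq> {0..<N}" by auto
  then show "newJ c i \<subseteq> {0..<N}" "finite (newJ c i)" "cur c = Some j \<Longrightarrow> j < N"
    by (auto simp: jobs_at_def intro: finite_subset)
qed

lemma exists_overloaded_machine: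
  assumes "finite J" "X \<subseteq> J" "\<sigma> \<in> J \<rightarrow>\<^sub>E {..<m}" "S \<subseteq> {..<m}"
    and capacity: "(\<Sum>i\<in>S. T * s i) < (\<Sum>k\<in>X. p k)"
    and too_large: "\<And>k i. k \<in> X \<Longrightarrow> i < m \<Longrightarrow> i \<notin> S \<Longrightarrow> T * s i < p k"
  shows "\<exists>i<m. T < load s p J \<sigma> i"
proof (cases "\<sigma> ` X \<subseteq> S")
  case True
  have "finite S" using assms(4) by (rule finite_subset) simp
  have "\<exists>i\<in>S. T * s i < (\<Sum>k\<in>{k\<in>J. \<sigma> k = i}. p k)"
    by (rule exists_fibre_sum_gt[OF assms(1,2) True \<open>finite S\<close> _ capacity])
      (auto intro: less_imp_le sizes_pos)
  then show ?thesis
    using assms(4) by (force simp: load_def speeds_pos pos_less_divide_eq mult.commute)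
next
  case False
  then obtain k where k: "k \<in> X" "\<sigma> k \<notin> S" by auto
  have "\<sigma> k < m" using assms(2,3) k(1) by auto
  then have "T * s (\<sigma> k) < p k" using k by (intro too_large)
  also have "p k \<le> (\<Sum>k'\<in>{k'\<in>J. \<sigma> k' = \<sigma> k}. p k')"
    using assms(1,2) k(1) sizes_pos by (intro member_le_sum) (auto intro: less_imp_le)
  finally show ?thesis
    using \<open>\<sigma> k < m\<close> by (auto simp: load_def speeds_pos pos_less_divide_eq mult.commute)
qed

lemma guess_less_OPT_if_none_eligible:
  assumes inv: "invariant N c" and cur: "cur c = Some j" and none: "Mt m s p \<eta> c j = {}"
  shows "gT c < OPT m s p {0..<N}"
proof -
  define T where "T = gT c"
  have T_pos: "0 < T" and disj: "disjoint_family (jobs_at c)" and large: "large_new_jobs c"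
    using inv by (auto simp: invariant_def T_def)
  have j_large: "T * s r < p j" if "r < m" "\<not> saturated s p c r" for r
  proof (rule eta_mult_less_imp_less)
    show "\<eta> * (T * s r) < p j"
      using large_if_ineligible[OF that, of j] none by (simp add: T_def mult.assoc)
    show "0 \<le> T * s r" using T_pos speeds_pos[OF that(1)] by simp
  qed
  define S where "S = {i. i < m \<and> (\<forall>r<m. \<not> saturated s p c r \<longrightarrow> s r < s i)}"
  define X where "X = insert j (\<Union>i\<in>S. newJ c i)"
  have "finite S" by (simp add: S_def)
  have "(\<Sum>i\<in>S. T * s i) \<le> (\<Sum>i\<in>S. \<Sum>k\<in>newJ c i. p k)"
    by (intro sum_mono) (auto simp: S_def T_def speeds_pos saturated_iff[symmetric])
  also have "\<dots> < p j + (\<Sum>i\<in>S. \<Sum>k\<in>newJ c i. p k)"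
    using sizes_pos by simp
  also have "\<dots> = (\<Sum>k\<in>X. p k)"
    unfolding X_def using \<open>finite S\<close> invariant_boundedD(2)[OF inv] newJ_disjoint[OF disj]
      cur_notin_newJ[OF disj cur]
    by (simp add: sum.UNION_disjoint)
  finally have capacity: "(\<Sum>i\<in>S. T * s i) < (\<Sum>k\<in>X. p k)" .
  have too_large: "T * s i < p k" if k: "k \<in> X" and i: "i < m" "i \<notin> S" for k i
  proof -
    obtain r where r: "r < m" "\<not> saturated s p c r" "s i \<le> s r"
      using i by (auto simp: S_def not_less)
    have "T * s i \<le> T * s r" using r(3) T_pos by simp
    also have "\<dots> < p k"
      using k j_large[OF r(1,2)] large r(1,2) unfolding X_def large_new_jobs_def T_def
      by (fastforce simp: S_def)
    finally show ?thesis .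
  qed
  have "X \<subseteq> {0..<N}" using invariant_boundedD[OF inv] cur by (auto simp: X_def)
  then have "\<exists>i<m. T < load s p {0..<N} \<sigma> i" if "\<sigma> \<in> {0..<N} \<rightarrow>\<^sub>E {..<m}" for \<sigma>
    using exists_overloaded_machine[OF _ _ that _ capacity too_large] by (auto simp: S_def)
  then show ?thesis using machines_nonempty by (simp add: less_OPT_iff T_def)
qed

lemma invariant_init: "invariant 1 (init_cfg s p)"
proof -
  define T where "T = p 0 / s 0"
  have s0: "0 < s 0" using speeds_pos machines_nonempty by blast
  then have T_pos: "0 < T" using sizes_pos by (simp add: T_def)
  have "jobs_at (init_cfg s p) = (\<lambda>_. {})(New 0 := {0})"
    by (auto simp: jobs_at_def init_cfg_def fun_eq_iff split: slot.split)
  then have jobs: "disjoint_family (jobs_at (init_cfg s p))"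
      "\<Union>(range (jobs_at (init_cfg s p))) \<subseteq> {0..<1}"
    by (auto simp: disjoint_family_on_def)
  have "T * s i' < p 0" if "s i' < s 0" for i'
    using mult_strict_left_mono[OF that T_pos] s0 by (simp add: T_def)
  then have large: "large_new_jobs (init_cfg s p)"
    by (auto simp: large_new_jobs_def init_cfg_def T_def)
  have "T / \<xi> < load s p {0..<1} \<sigma> (\<sigma> 0)" if "\<sigma> 0 < m" for \<sigma>
  proof -
    have "T / \<xi> < T" using T_pos \<xi>_gt_1 by (simp add: divide_less_eq)
    also have "T \<le> p 0 / s (\<sigma> 0)"
      unfolding T_def using that sizes_pos speeds_pos first_fastest
      by (intro divide_left_mono) (auto intro: less_imp_le)
    also have "{j \<in> {0..<1}. \<sigma> j = \<sigma> 0} = {0::nat}" by auto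
    then have "p 0 / s (\<sigma> 0) = load s p {0..<1} \<sigma> (\<sigma> 0)" by (simp add: load_def)
    finally show ?thesis .
  qed
  moreover have "\<sigma> 0 < m" if "\<sigma> \<in> {0..<1} \<rightarrow>\<^sub>E {..<m}" for \<sigma> :: "nat \<Rightarrow> nat"
    using that by (auto simp: PiE_iff)
  ultimately have "T / \<xi> < OPT m s p {0..<1}"
    using machines_nonempty by (auto simp: less_OPT_iff)
  with T_pos jobs large show ?thesis by (simp add: invariant_def init_cfg_def T_def)
qed

lemma invariant_rearrange:
  assumes "invariant N c" "disjoint_family (jobs_at c')"
    and "\<Union>(range (jobs_at c')) \<subseteq> \<Union>(range (jobs_at c))" "gT c' = gT c" "large_new_jobs c'"
  shows "invariant N c'"
  using assms by (auto simp: invariant_def)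

lemma invariant_arrive:
  assumes inv: "invariant n c"
  shows "invariant (Suc n) (c\<lparr>queue := {n}\<rparr>)"
proof -
  have bounded: "\<Union>(range (jobs_at c)) \<subseteq> {0..<n}" using inv by (simp add: invariant_def)
  have arrived: "jobs_at (c\<lparr>queue := {n}\<rparr>) = (jobs_at c)(Queued := {n})"
    by (auto simp: jobs_at_def fun_eq_iff split: slot.split)
  have below: "jobs_at c y \<subseteq> {0..<n}" for y using bounded by blast
  then have "{n} \<inter> jobs_at c y = {}" for y by fastforce
  then have "disjoint_family ((jobs_at c)(Queued := {n}))"
    using inv by (intro disjoint_family_fun_upd) (simp_all add: invariant_def)
  moreover have "((jobs_at c)(Queued := {n})) y \<subseteq> {0..<Suc n}" for y
    using below[of y] by auto
  then have "\<Union>(range ((jobs_at c)(Queued := {n}))) \<subseteq> {0..<Suc n}" by blast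
  moreover have "gT c / \<xi> < OPT m s p {0..<n}" using inv by (simp add: invariant_def)
  then have "gT c / \<xi> < OPT m s p {0..<Suc n}"
    by (rule less_OPT_mono) (auto intro: less_imp_le speeds_pos sizes_pos machines_nonempty)
  moreover have "large_new_jobs (c\<lparr>queue := {n}\<rparr>) = large_new_jobs c"
    by (simp add: large_new_jobs_def saturated_def)
  ultimately show ?thesis
    using inv unfolding invariant_def arrived by simp
qed

lemma invariant_pick:
  assumes inv: "invariant N c" and "cur c = None" "j \<in> queue c"
  shows "invariant N (c\<lparr>queue := queue c - {j}, cur := Some j\<rparr>)" (is "invariant N ?c'")
proof -
  have picked: "jobs_at ?c'
      = (jobs_at c)(Queued := jobs_at c Queued - {j}, Current := jobs_at c Current \<union> {j})"
    using assms(2) by (auto simp: jobs_at_def fun_eq_iff split: slot.split)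
  have "{j} \<subseteq> jobs_at c Queued" using assms(3) by (simp add: jobs_at_def)
  note moved = disjoint_family_move[of "jobs_at c" "{j}" Queued Current, OF _ this]
    UN_range_move[of "{j}" "jobs_at c" Queued Current, OF this]
  show ?thesis
  proof (rule invariant_rearrange[OF inv])
    show "disjoint_family (jobs_at ?c')"
      using moved(1) inv unfolding picked by (simp add: invariant_def)
    show "\<Union>(range (jobs_at ?c')) \<subseteq> \<Union>(range (jobs_at c))"
      using moved(2) unfolding picked by simp
    show "large_new_jobs ?c'"
      using inv by (simp add: invariant_def large_new_jobs_def saturated_def)
  qed simp
qed

lemma invariant_raise:
  assumes "invariant N c" "cur c = Some j" "Mt m s p \<eta> c j = {}"
  shows "invariant N (c\<lparr>gT := \<xi> * gT c, oldJ := (\<lambda>i. oldJ c i \<union> newJ c i), newJ := (\<lambda>i. {}),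
                         pot := q\<rparr>)"
proof -
  have "disjoint_family (\<lambda>y. \<Union>(jobs_at c ` {x. demote x = y}))"
    using assms(1) by (intro disjoint_family_merge) (simp add: invariant_def)
  moreover have "gT c < OPT m s p {0..<N}"
    using assms by (rule guess_less_OPT_if_none_eligible)
  ultimately show ?thesis
    using assms(1) \<xi>_gt_1 unfolding invariant_def jobs_at_raise UN_range_merge
    by (auto simp: large_new_jobs_def)
qed

lemma invariant_promote:
  assumes inv: "invariant N c" and cur: "cur c = Some j"
    and eligible: "i \<in> Mt m s p \<eta> c j" and slowest: "\<forall>k\<in>Mt m s p \<eta> c j. s i \<le> s k"
  shows "invariant N (promote p \<eta> c i j)"
proof -
  define P where "P = {k \<in> oldJ c i. p j / \<eta> \<le> p k}"
  have promoted: "jobs_at (promote p \<eta> c i j)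
      = (jobs_at c)(Old i := jobs_at c (Old i) - P, New i := jobs_at c (New i) \<union> P)"
    by (auto simp: promote_def jobs_at_def P_def fun_eq_iff split: slot.split)
  have "P \<subseteq> jobs_at c (Old i)" by (auto simp: P_def jobs_at_def)
  note moved = disjoint_family_move[of "jobs_at c" P "Old i" "New i", OF _ this]
    UN_range_move[of P "jobs_at c" "Old i" "New i", OF this]
  have bounded: "\<Union>(range (jobs_at (promote p \<eta> c i j))) \<subseteq> {0..<N}"
    using moved(2) inv unfolding promoted by (simp add: invariant_def)
  have "large_new_jobs (promote p \<eta> c i j)"
  proof (rule large_new_jobs_extend)
    show "large_new_jobs c" using inv by (simp add: invariant_def)
    show "finite (newJ (promote p \<eta> c i j) i')" for i'
      using bounded by (rule finite_newJ)
    show "gT (promote p \<eta> c i j) = gT c" "newJ c i' \<subseteq> newJ (promote p \<eta> c i j) i'" for i'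
      by (auto simp: promote_def)
    fix i'' i' k
    assume k: "k \<in> newJ (promote p \<eta> c i j) i'' - newJ c i''"
      and i': "i' < m" "s i' < s i''" "\<not> saturated s p c i'"
    have "i'' = i" "p j / \<eta> \<le> p k"
      using k by (auto simp: promote_def split: if_splits)
    with i' have "\<eta> * (gT c * s i') < p j"
      using large_below_slowest_eligible[OF eligible slowest] by (simp add: mult.assoc)
    also have "p j \<le> \<eta> * p k"
      using \<open>p j / \<eta> \<le> p k\<close> \<eta>_ge_1 by (simp add: pos_divide_le_eq mult.commute)
    finally show "gT c * s i' < p k" using \<eta>_ge_1 by simp
  qed
  then show ?thesis
  proof (rule invariant_rearrange[OF inv, rotated 3])
    show "disjoint_family (jobs_at (promote p \<eta> c i j))"
      using moved(1) inv unfolding promoted by (simp add: invariant_def)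
    show "\<Union>(range (jobs_at (promote p \<eta> c i j))) \<subseteq> \<Union>(range (jobs_at c))"
      using moved(2) unfolding promoted by simp
    show "gT (promote p \<eta> c i j) = gT c" by (simp add: promote_def)
  qed
qed

lemma invariant_place:
  assumes inv: "invariant N c" and cur: "cur c = Some j" and R: "R \<subseteq> oldJ c i"
    and j_large: "\<And>i'. i' < m \<Longrightarrow> s i' < s i \<Longrightarrow> \<not> saturated s p c i' \<Longrightarrow> gT c * s i' < p j"
  shows "invariant N (c\<lparr>oldJ := (oldJ c)(i := oldJ c i - R), newJ := (newJ c)(i := insert j (newJ c i)),
                         queue := queue c \<union> R, cur := None, pot := q\<rparr>)" (is "invariant N ?c'")
proof -
  define F where "F = (jobs_at c)(Old i := jobs_at c (Old i) - R, Queued := jobs_at c Queued \<union> R)"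
  have placed: "jobs_at ?c' = F(Current := F Current - {j}, New i := F (New i) \<union> {j})"
    using cur by (auto simp: F_def jobs_at_def fun_eq_iff split: slot.split)
  have "R \<subseteq> jobs_at c (Old i)" using R by (simp add: jobs_at_def)
  note moved = disjoint_family_move[of "jobs_at c" R "Old i" Queued, OF _ this]
    UN_range_move[of R "jobs_at c" "Old i" Queued, OF this]
  have "{j} \<subseteq> F Current" using cur by (simp add: F_def jobs_at_def)
  note moved' = disjoint_family_move[of F "{j}" Current "New i", OF _ this]
    UN_range_move[of "{j}" F Current "New i", OF this]
  have disjoint: "disjoint_family (jobs_at ?c')"
    using moved(1) moved'(1) inv unfolding placed F_def[symmetric] by (simp add: invariant_def)
  have same_jobs: "\<Union>(range (jobs_at ?c')) = \<Union>(range (jobs_at c))"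
    using moved(2) moved'(2) unfolding placed F_def[symmetric] by simp
  have "large_new_jobs ?c'"
  proof (rule large_new_jobs_extend)
    show "large_new_jobs c" using inv by (simp add: invariant_def)
    show "finite (newJ ?c' i')" for i'
      using inv same_jobs by (intro finite_newJ[where N = N]) (simp add: invariant_def)
    show "gT ?c' = gT c" "newJ c i' \<subseteq> newJ ?c' i'" for i' by auto
    fix i'' i' k
    assume "k \<in> newJ ?c' i'' - newJ c i''" "i' < m" "s i' < s i''" "\<not> saturated s p c i'"
    moreover from this(1) have "i'' = i" "k = j" by (auto split: if_splits)
    ultimately show "gT c * s i' < p k" using j_large by blast
  qed
  with disjoint same_jobs show ?thesis by (intro invariant_rearrange[OF inv]) simp_all
qed

lemma invariant_step:
  assumes "step m s p \<xi> \<gamma> \<eta> amort c c'" "invariant N c"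
  shows "invariant N c'"
  using assms(1)
proof cases
  case (pick j)
  show ?thesis unfolding pick(1) by (rule invariant_pick[OF assms(2) pick(2,3)])
next
  case (raise j)
  show ?thesis unfolding raise(1) by (rule invariant_raise[OF assms(2) raise(2,3)])
next
  case (promote_sat j i)
  show ?thesis unfolding promote_sat(1) by (rule invariant_promote[OF assms(2) promote_sat(2-4)])
next
  case (place j i promoted xs R \<pi>)
  note promoted = \<open>promoted = promote p \<eta> c i j\<close>
  have inv: "invariant N promoted"
    using invariant_promote[OF assms(2) place(2-4)] promoted by simp
  have same_guess: "gT promoted = gT c" and grown: "\<And>i'. newJ c i' \<subseteq> newJ promoted i'"
    using promoted by (auto simp: promote_def)
  have "R \<subseteq> oldJ promoted i"
    using fst_greedy_subset[of p _ xs] place(8,10) by (metis fst_conv)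
  moreover have "cur promoted = Some j" using promoted place(2) by (simp add: promote_def)
  moreover have "gT promoted * s i' < p j"
    if i': "i' < m" "s i' < s i" "\<not> saturated s p promoted i'" for i'
  proof -
    have "\<not> saturated s p c i'"
      using i' saturated_mono[OF _ i'(1) same_guess grown invariant_boundedD(2)[OF inv]] by blast
    then have "\<eta> * (gT promoted * s i') < p j"
      using large_below_slowest_eligible[OF place(3,4) i'(1,2)] same_guess by (simp add: mult.assoc)
    moreover have "0 < gT promoted" using inv by (simp add: invariant_def)
    ultimately show ?thesis
      using speeds_pos[OF i'(1)] by (auto intro: eta_mult_less_imp_less)
  qed
  ultimately have "invariant N (promoted\<lparr>oldJ := (oldJ promoted)(i := oldJ promoted i - R),
      newJ := (newJ promoted)(i := insert j (newJ promoted i)), queue := queue promoted \<union> R,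
      cur := None, pot := if amort then (pot promoted)(i := \<pi>) else pot promoted\<rparr>)"
    by (intro invariant_place[OF inv])
  then show ?thesis unfolding place(1) .
qed

lemma invariant_steps:
  "(step m s p \<xi> \<gamma> \<eta> amort)\<^sup>*\<^sup>* c c' \<Longrightarrow> invariant N c \<Longrightarrow> invariant N c'"
  by (induction rule: rtranclp_induct) (auto intro: invariant_step)

lemma invariant_reach: "reach m s p \<xi> \<gamma> \<eta> amort n c \<Longrightarrow> invariant n c"
proof (induction rule: reach.induct)
  case first
  show ?case by (rule invariant_init)
next
  case (arrive n c c')
  then show ?case using invariant_arrive invariant_steps by blast
qed

end

theorem lemma3:
  fixes m :: nat and s p :: "nat \<Rightarrow> real" and \<xi> \<gamma> \<eta> :: real and amort :: bool
    and n :: nat and c :: cfg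
  assumes "m \<ge> 1"
    and "\<forall>i j. i \<le> j \<longrightarrow> j < m \<longrightarrow> s j \<le> s i"
    and "\<forall>i<m. s i > 0"
    and "\<forall>j. p j > 0"
    and "\<xi> > 1" and "0 < \<gamma>" and "\<gamma> < 1" and "\<eta> \<ge> 1"
    and "reach m s p \<xi> \<gamma> \<eta> amort n c"
  shows "gT c / \<xi> < OPT m s p {0..<n}"
proof -
  interpret related_machines m s p \<xi> \<eta>
    using assms(1-5,8) by unfold_locales auto
  have "invariant n c" using assms(9) by (rule invariant_reach)
  then show ?thesis by (simp add: invariant_def)
qed

end
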